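(* Let $n \ge 1$ and let $v_1,\dots,v_n > 0$. Consider the tit-for-tat dynamic on players $N=\{1,\dots,n\}$ with values $v_1,\dots,v_n$, started from a non-degenerate configuration: $x_i(0)>0$ for all $i$, and $y_{i,j}(0)>0$ for all $i,j$ with $\sum_{j=1}^n y_{i,j}(0)=1$ for each $i$. Let $v^* = \max_{k\in[n]} v_k$. Let $i$ be any player and $j$ any player with $v_j < v^*$. Then $\lim_{t\to\infty} y_{i,j}(t) = 0$.
   Context: Tit-for-tat dynamic: there are $n$ players; player $i$ produces good $i$, and each unit of good $j$ used as input by any player yields $v_j$ units of that player's own good. At time $t$, player $i$ holds an amount $x_i(t)$ of good $i$ and allocates it according to fractions $y_{i,j}(t)\ge 0$, $\sum_j y_{i,j}(t)=1$ ($y_{i,j}(t)$ is the fraction of good $i$ given to player $j$). At each time $t$: (Exchange) every player $i$ receives $w_{i,j}(t) = y_{j,i}(t)\, x_j(t)$ units of each good $j$; (Production) $x_i(t+1) = \sum_{j=1}^n v_j\, w_{i,j}(t)$; (Fractions update) $y_{i,j}(t+1) = \dfrac{v_j\, w_{i,j}(t)}{x_i(t+1)}$. *)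

theory Defs
  imports "HOL-Analysis.Analysis"
begin

text \<open>Tit-for-tat dynamic. Players are 0, ..., n-1. A state is a pair (x, y) with
  x i the amount of good i held by player i and y i j the fraction of good i given to j.\<close>

definition tft_step :: "nat \<Rightarrow> (nat \<Rightarrow> real) \<Rightarrow> (nat \<Rightarrow> real) \<times> (nat \<Rightarrow> nat \<Rightarrow> real)
    \<Rightarrow> (nat \<Rightarrow> real) \<times> (nat \<Rightarrow> nat \<Rightarrow> real)" where
  "tft_step n v s =
    (let x = fst s; y = snd s;
         w = (\<lambda>i j. y j i * x j);
         x' = (\<lambda>i. \<Sum>j<n. v j * w i j)
     in (x', (\<lambda>i j. v j * w i j / x' i)))"

fun tft :: "nat \<Rightarrow> (nat \<Rightarrow> real) \<Rightarrow> (nat \<Rightarrow> real) \<Rightarrow> (nat \<Rightarrow> nat \<Rightarrow> real)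
    \<Rightarrow> nat \<Rightarrow> (nat \<Rightarrow> real) \<times> (nat \<Rightarrow> nat \<Rightarrow> real)" where
  "tft n v x0 y0 0 = (x0, y0)"
| "tft n v x0 y0 (Suc t) = tft_step n v (tft n v x0 y0 t)"

definition tft_x where "tft_x n v x0 y0 t = fst (tft n v x0 y0 t)"
definition tft_y where "tft_y n v x0 y0 t = snd (tft n v x0 y0 t)"

end

theory Submission
  imports Defs
begin

text \<open>Write \<open>g t a c = y t a c * x t a\<close> for the amount of good \<open>a\<close> that player \<open>a\<close>
  gives to player \<open>c\<close> at time \<open>t\<close>. The update rules say exactly that
  \<open>g (t+1) a c = v c * g t c a\<close>: each player gives back what it received, scaled by
  its value. Two steps give \<open>g (t+2) a c = v a * v c * g t a c\<close>, so for a player \<open>k\<close>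
  of maximal value the ratio \<open>y t i j / y t i k = g t i j / g t i k\<close> is multiplied by
  \<open>v j / v k < 1\<close> every two steps. As \<open>y t i k \<le> 1\<close>, this ratio bounds \<open>y t i j\<close>,
  which therefore tends to \<open>0\<close> geometrically.\<close>

lemma tft_x_0 [simp]: "tft_x n v x0 y0 0 = x0"
  and tft_y_0 [simp]: "tft_y n v x0 y0 0 = y0"
  by (simp_all add: tft_x_def tft_y_def)

lemma tft_x_Suc:
  "tft_x n v x0 y0 (Suc t) a = (\<Sum>l<n. v l * (tft_y n v x0 y0 t l a * tft_x n v x0 y0 t l))"
  by (simp add: tft_x_def tft_y_def tft_step_def Let_def)

lemma tft_y_Suc:
  "tft_y n v x0 y0 (Suc t) a c =
     v c * (tft_y n v x0 y0 t c a * tft_x n v x0 y0 t c) / tft_x n v x0 y0 (Suc t) a"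
  by (simp add: tft_x_def tft_y_def tft_step_def Let_def)

lemma tft_y_Suc_row_sum:
  assumes "tft_x n v x0 y0 (Suc t) a \<noteq> 0"
  shows "(\<Sum>l<n. tft_y n v x0 y0 (Suc t) a l) = 1"
  using assms by (simp add: tft_y_Suc flip: sum_divide_distrib tft_x_Suc)

locale tft_nondegenerate =
  fixes n :: nat and v x0 :: "nat \<Rightarrow> real" and y0 :: "nat \<Rightarrow> nat \<Rightarrow> real"
  assumes v_pos: "k < n \<Longrightarrow> 0 < v k"
    and x0_pos: "k < n \<Longrightarrow> 0 < x0 k"
    and y0_pos: "k < n \<Longrightarrow> l < n \<Longrightarrow> 0 < y0 k l"
begin

abbreviation X where "X \<equiv> tft_x n v x0 y0"
abbreviation Y where "Y \<equiv> tft_y n v x0 y0"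

definition gift :: "nat \<Rightarrow> nat \<Rightarrow> nat \<Rightarrow> real" where
  "gift t a c = Y t a c * X t a"

lemma tft_pos: "(\<forall>a<n. 0 < X t a) \<and> (\<forall>a<n. \<forall>c<n. 0 < Y t a c)"
proof (induction t)
  case 0
  then show ?case using x0_pos y0_pos by simp
next
  case (Suc t)
  have X_Suc_pos: "0 < X (Suc t) a" if "a < n" for a
    unfolding tft_x_Suc using Suc that v_pos by (intro sum_pos) auto
  then have "0 < Y (Suc t) a c" if "a < n" "c < n" for a c
    unfolding tft_y_Suc using Suc that v_pos by simp
  with X_Suc_pos show ?case by blast
qed

lemma X_pos: "a < n \<Longrightarrow> 0 < X t a"
  and Y_pos: "a < n \<Longrightarrow> c < n \<Longrightarrow> 0 < Y t a c"
  using tft_pos by blast+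

lemma Y_le_one:
  assumes y0_row_sum: "\<And>a. a < n \<Longrightarrow> (\<Sum>l<n. y0 a l) = 1"
    and "a < n" "c < n"
  shows "Y t a c \<le> 1"
proof -
  have "(\<Sum>l<n. Y t a l) = 1"
  proof (cases t)
    case 0
    then show ?thesis using y0_row_sum \<open>a < n\<close> by simp
  next
    case (Suc s)
    then show ?thesis
      using tft_y_Suc_row_sum[of n v x0 y0 s a] X_pos[OF \<open>a < n\<close>, of t] by simp
  qed
  moreover have "Y t a c \<le> (\<Sum>l<n. Y t a l)"
    using \<open>a < n\<close> \<open>c < n\<close> Y_pos by (intro member_le_sum) (auto intro: less_imp_le)
  ultimately show ?thesis by simp
qed

lemma gift_Suc: "a < n \<Longrightarrow> gift (Suc t) a c = v c * gift t c a"
  using X_pos[of a "Suc t"] by (simp add: gift_def tft_y_Suc)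

lemma gift_Suc_Suc: "a < n \<Longrightarrow> c < n \<Longrightarrow> gift (Suc (Suc t)) a c = v a * v c * gift t a c"
  by (simp add: gift_Suc)

lemma gift_add_even: "a < n \<Longrightarrow> c < n \<Longrightarrow> gift (t + 2 * m) a c = (v a * v c) ^ m * gift t a c"
  by (induction m) (simp_all add: gift_Suc_Suc)

lemma Y_ratio_eq_gift_ratio: "a < n \<Longrightarrow> Y t a c / Y t a k = gift t a c / gift t a k"
  using X_pos[of a t] by (simp add: gift_def)

lemma Y_ratio_add_even:
  assumes "a < n" "c < n" "k < n"
  shows "Y (t + 2 * m) a c / Y (t + 2 * m) a k = (v c / v k) ^ m * (Y t a c / Y t a k)"
  using assms v_pos[of a]
  by (simp add: Y_ratio_eq_gift_ratio gift_add_even power_mult_distrib power_divide)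

lemma Y_tendsto_zero:
  assumes y0_row_sum: "\<And>a. a < n \<Longrightarrow> (\<Sum>l<n. y0 a l) = 1"
    and a: "a < n" and c: "c < n" and k: "k < n" and "v c < v k"
  shows "(\<lambda>t. Y t a c) \<longlonglongrightarrow> 0"
proof -
  define r where "r = v c / v k"
  have r: "0 < r" "r < 1"
    using v_pos[OF c] v_pos[OF k] \<open>v c < v k\<close> by (simp_all add: r_def)
  define ratio where "ratio t = Y t a c / Y t a k" for t
  have ratio_pos: "0 < ratio t" for t
    using Y_pos a c k by (simp add: ratio_def)
  have Y_le: "Y t a c \<le> r ^ (t div 2) * (ratio 0 + ratio 1)" for t
  proof -
    have "Y t a c \<le> ratio t"
      using Y_pos[OF a c, of t] Y_pos[OF a k, of t] Y_le_one[OF y0_row_sum a k, of t]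
      by (simp add: ratio_def le_divide_eq mult_le_cancel_left1)
    also have "\<dots> = r ^ (t div 2) * ratio (t mod 2)"
      using Y_ratio_add_even[OF a c k, of "t mod 2" "t div 2"] by (simp add: ratio_def r_def)
    also have "\<dots> \<le> r ^ (t div 2) * (ratio 0 + ratio 1)"
      using ratio_pos[of 0] ratio_pos[of 1] r
      by (intro mult_left_mono) (auto simp: mod2_eq_if)
    finally show ?thesis .
  qed
  have "(\<lambda>t. r ^ (t div 2)) \<longlonglongrightarrow> 0"
    using filterlim_compose[OF LIMSEQ_power_zero filterlim_at_top_div_const_nat, of r 2] r
    by simp
  then have bound_tendsto: "(\<lambda>t. r ^ (t div 2) * (ratio 0 + ratio 1)) \<longlonglongrightarrow> 0"
    by (rule tendsto_mult_left_zero)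
  have Y_nonneg: "0 \<le> Y t a c" for t
    using Y_pos[OF a c] by (rule less_imp_le)
  show ?thesis
    by (rule tendsto_sandwich[OF always_eventually always_eventually tendsto_const bound_tendsto])
      (use Y_nonneg Y_le in auto)
qed

end

theorem corollary1:
  fixes n :: nat and v x0 :: "nat \<Rightarrow> real" and y0 :: "nat \<Rightarrow> nat \<Rightarrow> real"
    and i j :: nat
  assumes "n \<ge> 1"
    and "\<And>k. k < n \<Longrightarrow> v k > 0"
    and "\<And>k. k < n \<Longrightarrow> x0 k > 0"
    and "\<And>k l. k < n \<Longrightarrow> l < n \<Longrightarrow> y0 k l > 0"
    and "\<And>k. k < n \<Longrightarrow> (\<Sum>l<n. y0 k l) = 1"
    and "i < n" and "j < n"
    and "v j < Max (v ` {..<n})"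
  shows "(\<lambda>t. tft_y n v x0 y0 t i j) \<longlonglongrightarrow> 0"
proof -
  interpret tft_nondegenerate n v x0 y0
    using assms(2-4) by unfold_locales
  have "Max (v ` {..<n}) \<in> v ` {..<n}"
    using assms(1) by (intro Max_in) (auto simp: lessThan_empty_iff)
  then obtain k where k: "k < n" "v k = Max (v ` {..<n})"
    by auto
  show ?thesis
    using Y_tendsto_zero[OF assms(5-7) k(1)] assms(8) k(2) by simp
qed

end
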